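(* Let $G_1,G_2$ be finite connected bipartite $\mathcal{C}$-$\mathrm{HH}$ graphs which both satisfy property (B2). Then: (i) if $\Delta(G_1)\le\Delta(G_2)$, then $G_1$ is $\mathcal{C}$-$\mathrm{HH}$-morphic to $G_2$; (ii) if $\Delta(G_1)=\Delta(G_2)$, then $G_1,G_2$ are $\mathcal{C}$-$\mathrm{HH}$-symmetric; (iii) if $\Delta(G_1)>\Delta(G_2)$ and $G_2$ satisfies property (B2* ), then $G_1,G_2$ are $\mathcal{C}$-$\mathrm{HH}$-symmetric.
   Context: $\Delta(G)$ is the maximum degree. For a connected bipartite graph $G$ with bipartition $(X,Y)$: property (B2) means that for each $k\le\Delta(G)$ every $k$-element subset of $X$ and every $k$-element subset of $Y$ has a common neighbour (a vertex adjacent to all its elements); property (B2* ) means that some vertex is adjacent to all of $X$ and some vertex is adjacent to all of $Y$. Subgraphs are induced; a homomorphism maps edges to edges. A graph $G$ is $\mathcal{C}$-$\mathrm{HH}$ if every homomorphism from a finite connected induced subgraph of $G$ into $G$ extends to a homomorphism $G\to G$. $G_1$ is $\mathcal{C}$-$\mathrm{HH}$-morphic to $G_2$ if every homomorphism from a finite connected induced subgraph $A$ of $G_1$ onto an induced subgraph $B$ of $G_2$ extends to a homomorphism $G_1\to G_2$; $G_1,G_2$ are $\mathcal{C}$-$\mathrm{HH}$-symmetric if each is $\mathcal{C}$-$\mathrm{HH}$-morphic to the other. *)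

theory Defs
  imports Main
begin

definition graph :: "'a set \<Rightarrow> ('a \<Rightarrow> 'a \<Rightarrow> bool) \<Rightarrow> bool" where
  "graph V E \<longleftrightarrow> (\<forall>x y. E x y \<longrightarrow> x \<in> V \<and> y \<in> V) \<and>
                   (\<forall>x y. E x y \<longrightarrow> E y x) \<and> (\<forall>x. \<not> E x x)"

definition induced :: "'a set \<Rightarrow> ('a \<Rightarrow> 'a \<Rightarrow> bool) \<Rightarrow> 'a \<Rightarrow> 'a \<Rightarrow> bool" where
  "induced A E = (\<lambda>x y. x \<in> A \<and> y \<in> A \<and> E x y)"

definition connected_graph :: "'a set \<Rightarrow> ('a \<Rightarrow> 'a \<Rightarrow> bool) \<Rightarrow> bool" where
  "connected_graph V E \<longleftrightarrow> V \<noteq> {} \<and>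
     (\<forall>x\<in>V. \<forall>y\<in>V. (induced V E)\<^sup>*\<^sup>* x y)"

definition degree :: "'a set \<Rightarrow> ('a \<Rightarrow> 'a \<Rightarrow> bool) \<Rightarrow> 'a \<Rightarrow> nat" where
  "degree V E x = card {y \<in> V. E x y}"

definition max_degree :: "'a set \<Rightarrow> ('a \<Rightarrow> 'a \<Rightarrow> bool) \<Rightarrow> nat" where
  "max_degree V E = Max (degree V E ` V)"

definition bipartition :: "'a set \<Rightarrow> ('a \<Rightarrow> 'a \<Rightarrow> bool) \<Rightarrow> 'a set \<Rightarrow> 'a set \<Rightarrow> bool" where
  "bipartition V E X Y \<longleftrightarrow> X \<union> Y = V \<and> X \<inter> Y = {} \<and>
     (\<forall>x y. E x y \<longrightarrow> (x \<in> X \<and> y \<in> Y) \<or> (x \<in> Y \<and> y \<in> X))"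

definition common_neighbour :: "'a set \<Rightarrow> ('a \<Rightarrow> 'a \<Rightarrow> bool) \<Rightarrow> 'a set \<Rightarrow> 'a \<Rightarrow> bool" where
  "common_neighbour V E S v \<longleftrightarrow> v \<in> V \<and> (\<forall>a\<in>S. E v a)"

definition B2 :: "'a set \<Rightarrow> ('a \<Rightarrow> 'a \<Rightarrow> bool) \<Rightarrow> 'a set \<Rightarrow> 'a set \<Rightarrow> bool" where
  "B2 V E X Y \<longleftrightarrow> (\<forall>k \<le> max_degree V E. \<forall>S.
      ((S \<subseteq> X \<or> S \<subseteq> Y) \<and> finite S \<and> card S = k) \<longrightarrow> (\<exists>v. common_neighbour V E S v))"

definition B2_star :: "'a set \<Rightarrow> ('a \<Rightarrow> 'a \<Rightarrow> bool) \<Rightarrow> 'a set \<Rightarrow> 'a set \<Rightarrow> bool" where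
  "B2_star V E X Y \<longleftrightarrow> (\<exists>v. common_neighbour V E X v) \<and> (\<exists>v. common_neighbour V E Y v)"

definition hom :: "'a set \<Rightarrow> ('a \<Rightarrow> 'a \<Rightarrow> bool) \<Rightarrow> 'b set \<Rightarrow> ('b \<Rightarrow> 'b \<Rightarrow> bool) \<Rightarrow> ('a \<Rightarrow> 'b) \<Rightarrow> bool" where
  "hom V1 E1 V2 E2 f \<longleftrightarrow> (\<forall>x\<in>V1. f x \<in> V2) \<and>
     (\<forall>x\<in>V1. \<forall>y\<in>V1. E1 x y \<longrightarrow> E2 (f x) (f y))"

definition fin_conn_induced :: "'a set \<Rightarrow> ('a \<Rightarrow> 'a \<Rightarrow> bool) \<Rightarrow> 'a set \<Rightarrow> bool" where
  "fin_conn_induced V E A \<longleftrightarrow> A \<subseteq> V \<and> finite A \<and> connected_graph A (induced A E)"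

definition C_HH :: "'a set \<Rightarrow> ('a \<Rightarrow> 'a \<Rightarrow> bool) \<Rightarrow> bool" where
  "C_HH V E \<longleftrightarrow> (\<forall>A f. fin_conn_induced V E A \<and> hom A (induced A E) V E f \<longrightarrow>
      (\<exists>g. hom V E V E g \<and> (\<forall>x\<in>A. g x = f x)))"

definition C_HH_morphic :: "'a set \<Rightarrow> ('a \<Rightarrow> 'a \<Rightarrow> bool) \<Rightarrow> 'b set \<Rightarrow> ('b \<Rightarrow> 'b \<Rightarrow> bool) \<Rightarrow> bool" where
  "C_HH_morphic V1 E1 V2 E2 \<longleftrightarrow> (\<forall>A B f.
      fin_conn_induced V1 E1 A \<and> B \<subseteq> V2 \<and>
      hom A (induced A E1) B (induced B E2) f \<and> f ` A = B \<longrightarrow>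
      (\<exists>g. hom V1 E1 V2 E2 g \<and> (\<forall>x\<in>A. g x = f x)))"

definition C_HH_symmetric :: "'a set \<Rightarrow> ('a \<Rightarrow> 'a \<Rightarrow> bool) \<Rightarrow> 'b set \<Rightarrow> ('b \<Rightarrow> 'b \<Rightarrow> bool) \<Rightarrow> bool" where
  "C_HH_symmetric V1 E1 V2 E2 \<longleftrightarrow> C_HH_morphic V1 E1 V2 E2 \<and> C_HH_morphic V2 E2 V1 E1"

end

theory Submission
  imports Defs
begin

text \<open>Parts (i)--(iii) all follow from one criterion: if every nonempty set of at most
\<open>\<Delta>(G\<^sub>1)\<close> vertices on one side of \<open>G\<^sub>2\<close> has a common neighbour, then \<open>G\<^sub>1\<close> is
\<open>\<C>\<close>-HH-morphic to \<open>G\<^sub>2\<close>. Given a homomorphism \<open>f\<close> from a connected \<open>A\<close>, after possibly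
swapping the sides of \<open>G\<^sub>2\<close> it maps \<open>X\<^sub>1\<close> into \<open>X\<^sub>2\<close> and \<open>Y\<^sub>1\<close> into \<open>Y\<^sub>2\<close>. By connectedness of
\<open>G\<^sub>1\<close> it can be extended one vertex at a time: a new vertex \<open>x\<close> adjacent to the current
domain has at most \<open>\<Delta>(G\<^sub>1)\<close> neighbours there, their images lie on one side of \<open>G\<^sub>2\<close>, and
\<open>x\<close> is sent to a common neighbour of them, which lies on the correct side. Neither graph
needs to be \<open>\<C>\<close>-HH for this.\<close>

lemma bipartition_swap: "bipartition V E X Y \<Longrightarrow> bipartition V E Y X"
  unfolding bipartition_def by blast

lemma bipartition_edge_sides: "bipartition V E X Y \<Longrightarrow> E x y \<Longrightarrow> (x \<in> X) \<noteq> (y \<in> X)"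
  unfolding bipartition_def by blast

lemma connected_graph_edge_leaving:
  assumes "graph V E" "connected_graph V E" "M \<subseteq> V" "M \<noteq> {}" "M \<noteq> V"
  shows "\<exists>x\<in>V - M. \<exists>y\<in>M. E x y"
proof -
  obtain a b where "a \<in> M" "b \<in> V" "b \<notin> M" using assms(3-5) by blast
  then have "(induced V E)\<^sup>*\<^sup>* a b" using assms(2,3) unfolding connected_graph_def by blast
  then have "b \<in> M \<or> (\<exists>x\<in>V - M. \<exists>y\<in>M. E x y)"
  proof (induction rule: rtranclp_induct)
    case base
    then show ?case using \<open>a \<in> M\<close> by simp
  next
    case (step y z)
    then have "z \<in> V" "E z y" using assms(1) by (auto simp: induced_def graph_def)
    then show ?case using step.IH by blast
  qed
  then show ?thesis using \<open>b \<notin> M\<close> by blast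
qed

lemma hom_induced_insert:
  assumes "graph V1 E1" "graph V2 E2" "hom M (induced M E1) V2 E2 g" "v \<in> V2"
    and "\<And>z. z \<in> M \<Longrightarrow> E1 x z \<Longrightarrow> E2 v (g z)"
  shows "hom (insert x M) (induced (insert x M) E1) V2 E2 (g(x := v))"
  unfolding hom_def
proof (intro conjI ballI impI)
  fix z assume "z \<in> insert x M"
  then show "(g(x := v)) z \<in> V2" using assms(3,4) by (auto simp: hom_def)
next
  fix z w assume zw: "z \<in> insert x M" "w \<in> insert x M" "induced (insert x M) E1 z w"
  then have E: "E1 z w" "E1 w z" using assms(1) by (auto simp: induced_def graph_def)
  then have "z \<noteq> w" using assms(1) by (auto simp: graph_def)
  consider "z = x" | "w = x" | "z \<in> M" "w \<in> M" "z \<noteq> x" "w \<noteq> x" using zw by blast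
  then show "E2 ((g(x := v)) z) ((g(x := v)) w)"
  proof cases
    case 1
    then show ?thesis using assms(5) zw E \<open>z \<noteq> w\<close> by auto
  next
    case 2
    then have "E2 v (g z)" using assms(5) zw E \<open>z \<noteq> w\<close> by auto
    then show ?thesis using assms(2) 2 \<open>z \<noteq> w\<close> by (auto simp: graph_def)
  next
    case 3
    then show ?thesis using assms(3) E by (auto simp: hom_def induced_def)
  qed
qed

lemma card_neighbours_le_max_degree:
  assumes "finite V" "x \<in> V" "N \<subseteq> {z \<in> V. E x z}"
  shows "card N \<le> max_degree V E"
proof -
  have "card N \<le> degree V E x"
    unfolding degree_def using assms by (intro card_mono) auto
  also have "\<dots> \<le> max_degree V E"
    unfolding max_degree_def using assms(1,2) by (intro Max_ge) auto
  finally show ?thesis .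
qed

lemma hom_extend_by_vertex:
  assumes g1: "graph V1 E1" "finite V1" and bip1: "bipartition V1 E1 X1 Y1"
    and g2: "graph V2 E2" and bip2: "bipartition V2 E2 X2 Y2"
    and CN: "\<And>S. finite S \<Longrightarrow> S \<noteq> {} \<Longrightarrow> card S \<le> max_degree V1 E1 \<Longrightarrow>
               S \<subseteq> X2 \<or> S \<subseteq> Y2 \<Longrightarrow> \<exists>v. common_neighbour V2 E2 S v"
    and M: "M \<subseteq> V1" "x \<in> V1" "y \<in> M" "E1 x y"
    and g: "hom M (induced M E1) V2 E2 g" "\<forall>z\<in>M. g z \<in> X2 \<longleftrightarrow> z \<in> X1"
  shows "\<exists>v. hom (insert x M) (induced (insert x M) E1) V2 E2 (g(x := v)) \<and> (v \<in> X2 \<longleftrightarrow> x \<in> X1)"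
proof -
  define N where "N = {z \<in> M. E1 x z}"
  have "finite N" "y \<in> N" using g1(2) M unfolding N_def by (auto intro: finite_subset)
  have "card (g ` N) \<le> card N" using \<open>finite N\<close> by (rule card_image_le)
  also have "\<dots> \<le> max_degree V1 E1"
    using M(1) unfolding N_def by (intro card_neighbours_le_max_degree[OF g1(2) M(2)]) auto
  finally have "card (g ` N) \<le> max_degree V1 E1" .
  have N_side: "g z \<in> X2 \<longleftrightarrow> x \<notin> X1" if "z \<in> N" for z
  proof -
    have "z \<in> M" "E1 x z" using that unfolding N_def by auto
    then show ?thesis using g(2) bipartition_edge_sides[OF bip1 \<open>E1 x z\<close>] by auto
  qed
  have "g ` N \<subseteq> V2" using g(1) unfolding N_def hom_def by auto
  then have "g ` N \<subseteq> X2 \<or> g ` N \<subseteq> Y2"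
    using N_side bip2 unfolding bipartition_def by (cases "x \<in> X1") auto
  then obtain v where "common_neighbour V2 E2 (g ` N) v"
    using CN \<open>finite N\<close> \<open>y \<in> N\<close> \<open>card (g ` N) \<le> max_degree V1 E1\<close> by blast
  then have v: "v \<in> V2" "\<forall>z\<in>N. E2 v (g z)" unfolding common_neighbour_def by auto
  have "v \<in> X2 \<longleftrightarrow> x \<in> X1"
    using bipartition_edge_sides[OF bip2] v(2) N_side \<open>y \<in> N\<close> by blast
  moreover have "hom (insert x M) (induced (insert x M) E1) V2 E2 (g(x := v))"
    using v unfolding N_def by (intro hom_induced_insert[OF g1(1) g2 g(1)]) auto
  ultimately show ?thesis by blast
qed

lemma hom_extend_to_graph:
  assumes g1: "graph V1 E1" "finite V1" "connected_graph V1 E1"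
    and bip1: "bipartition V1 E1 X1 Y1"
    and g2: "graph V2 E2" and bip2: "bipartition V2 E2 X2 Y2"
    and CN: "\<And>S. finite S \<Longrightarrow> S \<noteq> {} \<Longrightarrow> card S \<le> max_degree V1 E1 \<Longrightarrow>
               S \<subseteq> X2 \<or> S \<subseteq> Y2 \<Longrightarrow> \<exists>v. common_neighbour V2 E2 S v"
    and "M \<subseteq> V1" "M \<noteq> {}"
    and "hom M (induced M E1) V2 E2 g" "\<forall>z\<in>M. g z \<in> X2 \<longleftrightarrow> z \<in> X1"
  shows "\<exists>h. hom V1 E1 V2 E2 h \<and> (\<forall>z\<in>M. h z = g z)"
  using assms(8-11)
proof (induction "card (V1 - M)" arbitrary: M g rule: less_induct)
  case less
  show ?case
  proof (cases "M = V1")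
    case True
    then have "hom V1 E1 V2 E2 g" using less.prems(3) g1(1) by (auto simp: hom_def induced_def graph_def)
    then show ?thesis by blast
  next
    case False
    then obtain x y where x: "x \<in> V1 - M" "y \<in> M" "E1 x y"
      using connected_graph_edge_leaving[OF g1(1,3) less.prems(1,2)] by blast
    then obtain v where v: "hom (insert x M) (induced (insert x M) E1) V2 E2 (g(x := v))"
        "v \<in> X2 \<longleftrightarrow> x \<in> X1"
      using hom_extend_by_vertex[OF g1(1,2) bip1 g2 bip2 CN less.prems(1) _ _ _ less.prems(3,4)]
      by blast
    have "card (V1 - insert x M) < card (V1 - M)"
      using x g1(2) by (intro psubset_card_mono) auto
    moreover have "\<forall>z\<in>insert x M. (g(x := v)) z \<in> X2 \<longleftrightarrow> z \<in> X1"
      using less.prems(4) v(2) x by auto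
    moreover have "insert x M \<subseteq> V1" using less.prems(1) x by blast
    ultimately obtain h where "hom V1 E1 V2 E2 h" "\<forall>z\<in>insert x M. h z = (g(x := v)) z"
      using less.hyps[of "insert x M" "g(x := v)"] v(1) by blast
    then show ?thesis using x by auto
  qed
qed

lemma hom_connected_sides:
  assumes bip1: "bipartition V1 E1 X1 Y1" and bip2: "bipartition V2 E2 X2 Y2"
    and conn: "connected_graph A (induced A E1)" and f: "hom A (induced A E1) V2 E2 f"
    and "a \<in> A" "z \<in> A"
  shows "f z \<in> X2 \<longleftrightarrow> (z \<in> X1 \<longleftrightarrow> (a \<in> X1 \<longleftrightarrow> f a \<in> X2))"
proof -
  have "(induced A (induced A E1))\<^sup>*\<^sup>* a z" using conn assms(5,6) unfolding connected_graph_def by blast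
  then show ?thesis
  proof (induction rule: rtranclp_induct)
    case (step y z)
    then have "E1 y z" "E2 (f y) (f z)" using f by (auto simp: induced_def hom_def)
    then show ?case
      using step.IH bipartition_edge_sides[OF bip1] bipartition_edge_sides[OF bip2] by blast
  qed blast
qed

lemma C_HH_morphic_if_common_neighbours:
  assumes g1: "graph V1 E1" "finite V1" "connected_graph V1 E1"
    and bip1: "bipartition V1 E1 X1 Y1"
    and g2: "graph V2 E2" and bip2: "bipartition V2 E2 X2 Y2"
    and CN: "\<And>S. finite S \<Longrightarrow> S \<noteq> {} \<Longrightarrow> card S \<le> max_degree V1 E1 \<Longrightarrow>
               S \<subseteq> X2 \<or> S \<subseteq> Y2 \<Longrightarrow> \<exists>v. common_neighbour V2 E2 S v"
  shows "C_HH_morphic V1 E1 V2 E2"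
  unfolding C_HH_morphic_def
proof (intro allI impI, elim conjE)
  fix A B f
  assume A: "fin_conn_induced V1 E1 A" and "B \<subseteq> V2"
    and "hom A (induced A E1) B (induced B E2) f" "f ` A = B"
  then have f: "hom A (induced A E1) V2 E2 f" by (auto simp: hom_def induced_def)
  have conn: "connected_graph A (induced A E1)" and "A \<subseteq> V1"
    using A unfolding fin_conn_induced_def by auto
  then obtain a where "a \<in> A" unfolding connected_graph_def by blast
  have sides: "f z \<in> X2 \<longleftrightarrow> (z \<in> X1 \<longleftrightarrow> (a \<in> X1 \<longleftrightarrow> f a \<in> X2))" if "z \<in> A" for z
    using hom_connected_sides[OF bip1 bip2 conn f \<open>a \<in> A\<close> that] .
  show "\<exists>g. hom V1 E1 V2 E2 g \<and> (\<forall>x\<in>A. g x = f x)"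
  proof (cases "a \<in> X1 \<longleftrightarrow> f a \<in> X2")
    case True
    then show ?thesis using hom_extend_to_graph[OF g1 bip1 g2 bip2 CN \<open>A \<subseteq> V1\<close> _ f] sides \<open>a \<in> A\<close>
      by blast
  next
    case False
    have "f z \<in> Y2 \<longleftrightarrow> z \<in> X1" if "z \<in> A" for z
      using sides[OF that] False f that bip2 unfolding hom_def bipartition_def by blast
    then show ?thesis
      using hom_extend_to_graph[OF g1 bip1 g2 bipartition_swap[OF bip2] _ \<open>A \<subseteq> V1\<close> _ f] CN \<open>a \<in> A\<close>
      by blast
  qed
qed

lemma C_HH_morphic_if_B2:
  assumes "graph V1 E1" "finite V1" "connected_graph V1 E1" "bipartition V1 E1 X1 Y1"
    and "graph V2 E2" "bipartition V2 E2 X2 Y2" "B2 V2 E2 X2 Y2"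
    and "max_degree V1 E1 \<le> max_degree V2 E2"
  shows "C_HH_morphic V1 E1 V2 E2"
proof (rule C_HH_morphic_if_common_neighbours[OF assms(1-6)])
  fix S :: "'b set" assume "finite S" "card S \<le> max_degree V1 E1" "S \<subseteq> X2 \<or> S \<subseteq> Y2"
  moreover from \<open>card S \<le> max_degree V1 E1\<close> have "card S \<le> max_degree V2 E2"
    using assms(8) by linarith
  ultimately show "\<exists>v. common_neighbour V2 E2 S v" using assms(7) unfolding B2_def by blast
qed

lemma C_HH_morphic_if_B2_star:
  assumes "graph V1 E1" "finite V1" "connected_graph V1 E1" "bipartition V1 E1 X1 Y1"
    and "graph V2 E2" "bipartition V2 E2 X2 Y2" "B2_star V2 E2 X2 Y2"
  shows "C_HH_morphic V1 E1 V2 E2"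
proof (rule C_HH_morphic_if_common_neighbours[OF assms(1-6)])
  fix S :: "'b set" assume "S \<subseteq> X2 \<or> S \<subseteq> Y2"
  then show "\<exists>v. common_neighbour V2 E2 S v"
    using assms(7) unfolding B2_star_def common_neighbour_def by blast
qed

theorem lemma6p5:
  fixes V1 :: "'a set" and E1 :: "'a \<Rightarrow> 'a \<Rightarrow> bool" and X1 Y1 :: "'a set"
    and V2 :: "'b set" and E2 :: "'b \<Rightarrow> 'b \<Rightarrow> bool" and X2 Y2 :: "'b set"
  assumes g1: "graph V1 E1" "finite V1" "connected_graph V1 E1"
      and bip1: "bipartition V1 E1 X1 Y1" and hh1: "C_HH V1 E1" and b1: "B2 V1 E1 X1 Y1"
      and g2: "graph V2 E2" "finite V2" "connected_graph V2 E2"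
      and bip2: "bipartition V2 E2 X2 Y2" and hh2: "C_HH V2 E2" and b2: "B2 V2 E2 X2 Y2"
  shows "(max_degree V1 E1 \<le> max_degree V2 E2 \<longrightarrow> C_HH_morphic V1 E1 V2 E2)
       \<and> (max_degree V1 E1 = max_degree V2 E2 \<longrightarrow> C_HH_symmetric V1 E1 V2 E2)
       \<and> (max_degree V1 E1 > max_degree V2 E2 \<and> B2_star V2 E2 X2 Y2
            \<longrightarrow> C_HH_symmetric V1 E1 V2 E2)"
  using C_HH_morphic_if_B2[OF g1 bip1 g2(1) bip2 b2] C_HH_morphic_if_B2[OF g2 bip2 g1(1) bip1 b1]
    C_HH_morphic_if_B2_star[OF g1 bip1 g2(1) bip2]
  unfolding C_HH_symmetric_def by auto

end
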